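(* Let $P$ be a causal stable system on $\mathcal{L}_{2e+}^n$ and let $\nu_k,\rho_k>0$ with $\nu_k\rho_k\le1/4$ for $k=1,2,\dots$. Suppose that for every sequence $(\tau_k)_{k\ge1}$ with $\tau_k\ge0$ and $\sum_{k=1}^\infty\tau_k=1$, $$\langle u,Pu\rangle\ge\Big(\sum_{k=1}^\infty\tau_k\nu_k\Big)\|u\|_2^2+\Big(\sum_{k=1}^\infty\tau_k\rho_k\Big)\|Pu\|_2^2\quad\forall u\in\mathcal{L}_{2+}.$$ Then $\theta(P)\le\arccos\big(2\sqrt{\sup_k\nu_k\rho_k}\big)$.
   Context: For $n\ge1$, $\mathcal{L}_2^n$ is the set of measurable $u:\mathbb{R}\to\mathbb{R}^n$ with $\|u\|_2^2=\int|u(t)|^2dt<\infty$, inner product $\langle u,v\rangle=\int u(t)^Tv(t)\,dt$; $\mathcal{L}_{2+}=\{u\in\mathcal{L}_2:u(t)=0\ \text{for}\ t<0\}$. For $T\ge0$, $(\Gamma_Tu)(t)=u(t)$ for $t\le T$, $0$ for $t>T$; $\mathcal{L}_{2e+}=\{u:\Gamma_Tu\in\mathcal{L}_{2+}\ \forall T\ge0\}$. A system is an operator $P:\mathcal{L}_{2e+}\to\mathcal{L}_{2e+}$ with $P0=0$, $P\ne0$; causal if $\Gamma_TP=\Gamma_TP\Gamma_T$ for all $T\ge0$; a causal system is stable if $Pu\in\mathcal{L}_{2+}$ for all $u\in\mathcal{L}_{2+}$ and $\sup_{0\ne u\in\mathcal{L}_{2+}}\|Pu\|_2/\|u\|_2<\infty$.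 The singular angle $\theta(P)\in[0,\pi]$ is given by $\cos\theta(P)=\inf\{\langle u,Pu\rangle/(\|u\|_2\|Pu\|_2):0\neq u\in\mathcal{L}_{2+},\ Pu\ne0\}$. *)

theory Defs
  imports "HOL-Analysis.Analysis"
begin

type_synonym 'n signal = "real \<Rightarrow> real ^ 'n"

definition L2 :: "'n::finite signal \<Rightarrow> bool" where
  "L2 u \<longleftrightarrow> u \<in> borel_measurable lebesgue \<and>
     integrable lebesgue (\<lambda>t. (norm (u t))^2)"

definition ip :: "'n::finite signal \<Rightarrow> 'n signal \<Rightarrow> real" where
  "ip u v = integral\<^sup>L lebesgue (\<lambda>t. u t \<bullet> v t)"

definition norm2 :: "'n::finite signal \<Rightarrow> real" where
  "norm2 u = sqrt (integral\<^sup>L lebesgue (\<lambda>t. (norm (u t))^2))"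

definition L2p :: "'n::finite signal \<Rightarrow> bool" where
  "L2p u \<longleftrightarrow> L2 u \<and> (AE t in lebesgue. t < 0 \<longrightarrow> u t = 0)"

definition trunc :: "real \<Rightarrow> 'n::finite signal \<Rightarrow> 'n signal" where
  "trunc T u = (\<lambda>t. if t \<le> T then u t else 0)"

definition L2ep :: "'n::finite signal \<Rightarrow> bool" where
  "L2ep u \<longleftrightarrow> (\<forall>T\<ge>0. L2p (trunc T u))"

definition ae_eq :: "'n::finite signal \<Rightarrow> 'n signal \<Rightarrow> bool" where
  "ae_eq u v \<longleftrightarrow> (AE t in lebesgue. u t = v t)"

definition is_system :: "('n::finite signal \<Rightarrow> 'n signal) \<Rightarrow> bool" where
  "is_system P \<longleftrightarrow> (\<forall>u. L2ep u \<longrightarrow> L2ep (P u)) \<and> ae_eq (P (\<lambda>t. 0)) (\<lambda>t. 0)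
     \<and> (\<exists>u. L2ep u \<and> \<not> ae_eq (P u) (\<lambda>t. 0))"

definition causal :: "('n::finite signal \<Rightarrow> 'n signal) \<Rightarrow> bool" where
  "causal P \<longleftrightarrow> is_system P \<and>
     (\<forall>T\<ge>0. \<forall>u. L2ep u \<longrightarrow> ae_eq (trunc T (P u)) (trunc T (P (trunc T u))))"

definition stable :: "('n::finite signal \<Rightarrow> 'n signal) \<Rightarrow> bool" where
  "stable P \<longleftrightarrow> causal P \<and> (\<forall>u. L2p u \<longrightarrow> L2p (P u)) \<and>
     bdd_above {norm2 (P u) / norm2 u | u. L2p u \<and> norm2 u \<noteq> 0}"

definition singular_angle :: "('n::finite signal \<Rightarrow> 'n signal) \<Rightarrow> real" where
  "singular_angle P = arccos (Inf {ip u (P u) / (norm2 u * norm2 (P u)) | u.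
      L2p u \<and> norm2 u \<noteq> 0 \<and> norm2 (P u) \<noteq> 0})"

end

theory Submission
  imports Defs
begin

text \<open>Choosing the weights \<open>\<tau>\<close> as a unit mass at \<open>k\<close> gives
  \<open>\<langle>u, P u\<rangle> \<ge> \<nu>\<^sub>k \<parallel>u\<parallel>\<^sup>2 + \<rho>\<^sub>k \<parallel>P u\<parallel>\<^sup>2 \<ge> 2 \<surd>(\<nu>\<^sub>k \<rho>\<^sub>k) \<parallel>u\<parallel> \<parallel>P u\<parallel>\<close> by AM-GM,
  so every cosine in the set defining the singular angle is at least \<open>2 \<surd>(sup\<^sub>k \<nu>\<^sub>k \<rho>\<^sub>k)\<close>,
  and at most 1 by Cauchy-Schwarz. Causality and \<open>P \<noteq> 0\<close> yield an input of finite
  energy with nonzero output, and the same inequality forces that input to be nonzero,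
  so the set is nonempty; since \<open>arccos\<close> is decreasing on \<open>[-1, 1]\<close>, the bound follows.\<close>

lemma norm2_nonneg: "norm2 u \<ge> 0"
  unfolding norm2_def by simp

lemma power2_norm2: "(norm2 u)^2 = integral\<^sup>L lebesgue (\<lambda>t. (norm (u t))^2)"
  unfolding norm2_def by (simp add: integral_nonneg_AE)

lemma norm2_eq_0_AE:
  assumes "L2 u" and "norm2 u = 0"
  shows "AE t in lebesgue. u t = 0"
proof -
  have "integrable lebesgue (\<lambda>t. (norm (u t))^2)"
    using assms(1) unfolding L2_def by auto
  moreover have "integral\<^sup>L lebesgue (\<lambda>t. (norm (u t))^2) = 0"
    using assms(2) power2_norm2[of u] by simp
  ultimately show ?thesis
    by (simp add: integral_nonneg_eq_0_iff_AE)
qed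

lemma ip_eq_0_if_norm2_eq_0:
  assumes "L2 u" and "norm2 u = 0"
  shows "ip u v = 0"
proof -
  have "AE t in lebesgue. u t \<bullet> v t = 0"
    using norm2_eq_0_AE[OF assms] by eventually_elim simp
  then show ?thesis
    unfolding ip_def by (rule integral_eq_zero_AE)
qed

lemma ip_commute: "ip u v = ip v u"
  unfolding ip_def by (simp add: inner_commute)

lemma two_sqrt_mult_le_sum_squares:
  fixes \<nu> \<rho> a b :: real
  assumes "0 \<le> \<nu>" and "0 \<le> \<rho>"
  shows "2 * sqrt (\<nu> * \<rho>) * (a * b) \<le> \<nu> * a^2 + \<rho> * b^2"
proof -
  have "0 \<le> (sqrt \<nu> * a - sqrt \<rho> * b)^2" by simp
  then show ?thesis
    using assms by (simp add: power2_eq_square algebra_simps real_sqrt_mult)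
qed

lemma inner_le_scaled_squares:
  fixes x y :: "'a::real_inner"
  assumes "0 < c"
  shows "\<bar>x \<bullet> y\<bar> \<le> c / 2 * (norm x)^2 + 1 / (2 * c) * (norm y)^2"
proof -
  have "2 * \<bar>x \<bullet> y\<bar> \<le> 2 * sqrt (c * (1 / c)) * (norm x * norm y)"
    using assms by (simp add: Cauchy_Schwarz_ineq2)
  also have "\<dots> \<le> c * (norm x)^2 + 1 / c * (norm y)^2"
    using assms by (intro two_sqrt_mult_le_sum_squares) auto
  finally show ?thesis by simp
qed

lemma two_sqrt_mult_le_ratio:
  fixes \<nu> \<rho> a b s :: real
  assumes "0 \<le> \<nu>" and "0 \<le> \<rho>" and "0 < a" and "0 < b"
    and "\<nu> * a^2 + \<rho> * b^2 \<le> s"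
  shows "2 * sqrt (\<nu> * \<rho>) \<le> s / (a * b)"
  using two_sqrt_mult_le_sum_squares[OF assms(1,2), of a b] assms(3-5)
  by (simp add: pos_le_divide_eq)

lemma two_sqrt_SUP_le:
  fixes f :: "'a \<Rightarrow> real"
  assumes "\<And>k. 0 \<le> f k" and "\<And>k. 2 * sqrt (f k) \<le> x"
  shows "2 * sqrt (SUP k. f k) \<le> x"
proof -
  have "(SUP k. f k) \<le> (x / 2)^2"
  proof (rule cSUP_least)
    fix k
    have "sqrt (f k) \<le> x / 2"
      using assms(2)[of k] by simp
    then show "f k \<le> (x / 2)^2"
      using assms(1)[of k] by (metis power_mono real_sqrt_ge_zero real_sqrt_pow2)
  qed simp
  moreover have "0 \<le> x"
    using assms[of undefined] by (metis mult_nonneg_nonneg order_trans real_sqrt_ge_zero zero_le_numeral)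
  ultimately show ?thesis
    using real_sqrt_le_mono by fastforce
qed

lemma arccos_Inf_le:
  fixes X :: "real set"
  assumes "X \<noteq> {}" and "\<And>x. x \<in> X \<Longrightarrow> c \<le> x \<and> x \<le> 1" and "-1 \<le> c"
  shows "arccos (Inf X) \<le> arccos c"
proof (rule arccos_le_arccos)
  show "c \<le> Inf X"
    using assms(1,2) by (intro cInf_greatest) auto
  obtain x where "x \<in> X"
    using assms(1) by blast
  then show "Inf X \<le> 1"
    using assms(2) by (meson bdd_belowI cInf_lower order_trans)
qed fact

lemma integrable_inner_L2:
  assumes "L2 u" and "L2 v"
  shows "integrable lebesgue (\<lambda>t. u t \<bullet> v t)"
proof (rule Bochner_Integration.integrable_bound)
  show "integrable lebesgue (\<lambda>t. (norm (u t))^2 / 2 + (norm (v t))^2 / 2)"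
    using assms unfolding L2_def by auto
  from assms have [measurable]: "u \<in> borel_measurable lebesgue" "v \<in> borel_measurable lebesgue"
    unfolding L2_def by auto
  show "(\<lambda>t. u t \<bullet> v t) \<in> borel_measurable lebesgue"
    by measurable
  show "AE t in lebesgue. norm (u t \<bullet> v t)
      \<le> norm ((norm (u t))^2 / 2 + (norm (v t))^2 / 2)"
    using inner_le_scaled_squares[of 1] by (intro AE_I2) simp
qed

lemma ip_le_norm2_mult:
  assumes "L2 u" and "L2 v"
  shows "ip u v \<le> norm2 u * norm2 v"
proof (cases "norm2 u = 0 \<or> norm2 v = 0")
  case True
  then have "ip u v = 0"
    using assms ip_eq_0_if_norm2_eq_0 ip_commute by metis
  then show ?thesis
    using True by auto
next
  case False
  \<comment> \<open>With this weight the pointwise AM-GM bound integrates to exactly \<open>norm2 u * norm2 v\<close>.\<close>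
  define c where "c = norm2 v / norm2 u"
  have c: "0 < c"
    using False norm2_nonneg[of u] norm2_nonneg[of v] by (simp add: c_def)
  have sq: "integrable lebesgue (\<lambda>t. (norm (u t))^2)" "integrable lebesgue (\<lambda>t. (norm (v t))^2)"
    using assms unfolding L2_def by auto
  have "ip u v \<le> integral\<^sup>L lebesgue (\<lambda>t. c / 2 * (norm (u t))^2 + 1 / (2 * c) * (norm (v t))^2)"
    unfolding ip_def using assms sq inner_le_scaled_squares[OF c]
    by (intro integral_mono integrable_inner_L2) (auto dest: abs_le_D1)
  also have "\<dots> = c / 2 * (norm2 u)^2 + 1 / (2 * c) * (norm2 v)^2"
    using sq by (simp add: power2_norm2)
  also have "\<dots> = norm2 u * norm2 v"
    using False by (simp add: c_def field_simps power2_eq_square)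
  finally show ?thesis .
qed

lemma ip_div_norm2_mult_le_1:
  assumes "L2 u" and "L2 v"
  shows "ip u v / (norm2 u * norm2 v) \<le> 1"
  using ip_le_norm2_mult[OF assms] norm2_nonneg[of u] norm2_nonneg[of v]
  by (auto simp: divide_le_eq_1 zero_less_mult_iff less_le)

lemma two_sqrt_SUP_le_ip_div_norm2_mult:
  fixes \<nu> \<rho> :: "'a \<Rightarrow> real"
  assumes "\<And>k. 0 \<le> \<nu> k" and "\<And>k. 0 \<le> \<rho> k" and "norm2 u \<noteq> 0" and "norm2 v \<noteq> 0"
    and "\<And>k. \<nu> k * (norm2 u)^2 + \<rho> k * (norm2 v)^2 \<le> ip u v"
  shows "2 * sqrt (SUP k. \<nu> k * \<rho> k) \<le> ip u v / (norm2 u * norm2 v)"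
proof -
  have "0 < norm2 u" "0 < norm2 v"
    using assms(3,4) norm2_nonneg[of u] norm2_nonneg[of v] by linarith+
  then show ?thesis
    using assms(1,2,5) by (intro two_sqrt_SUP_le two_sqrt_mult_le_ratio) auto
qed

lemma ae_eq_0_if_truncations_ae_eq_0:
  assumes "\<And>n::nat. ae_eq (trunc (real n) w) (\<lambda>t. 0)"
  shows "ae_eq w (\<lambda>t. 0)"
proof -
  have "AE t in lebesgue. \<forall>n::nat. trunc (real n) w t = 0"
    using assms unfolding ae_eq_def by (simp add: AE_all_countable)
  then show ?thesis
    unfolding ae_eq_def
  proof eventually_elim
    case (elim t)
    obtain n :: nat where "t \<le> real n"
      using real_arch_simple by blast
    then show ?case
      using elim[rule_format, of n] by (simp add: trunc_def)
  qed
qed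

lemma causal_obtains_L2p_nonzero_output:
  assumes "causal P"
  obtains v where "L2p v" and "\<not> ae_eq (P v) (\<lambda>t. 0)"
proof -
  obtain u where u: "L2ep u" and Pu: "\<not> ae_eq (P u) (\<lambda>t. 0)"
    using assms unfolding causal_def is_system_def by auto
  then obtain n :: nat where n: "\<not> ae_eq (trunc (real n) (P u)) (\<lambda>t. 0)"
    using ae_eq_0_if_truncations_ae_eq_0 by blast
  define v where "v = trunc (real n) u"
  have "L2p v"
    using u unfolding L2ep_def v_def by auto
  moreover have "\<not> ae_eq (P v) (\<lambda>t. 0)"
  proof
    assume "ae_eq (P v) (\<lambda>t. 0)"
    moreover have "ae_eq (trunc (real n) (P u)) (trunc (real n) (P v))"
      using assms u unfolding causal_def v_def by auto
    ultimately have "ae_eq (trunc (real n) (P u)) (\<lambda>t. 0)"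
      unfolding ae_eq_def by eventually_elim (simp add: trunc_def)
    with n show False ..
  qed
  ultimately show ?thesis
    using that by blast
qed

lemma causal_obtains_L2p_nonzero_input_output:
  assumes "causal P" and "\<And>u. L2p u \<Longrightarrow> L2p (P u)" and "0 < \<rho>"
    and "\<And>u. L2p u \<Longrightarrow> \<rho> * (norm2 (P u))^2 \<le> ip u (P u)"
  obtains v where "L2p v" and "norm2 v \<noteq> 0" and "norm2 (P v) \<noteq> 0"
proof -
  obtain v where v: "L2p v" and "\<not> ae_eq (P v) (\<lambda>t. 0)"
    using causal_obtains_L2p_nonzero_output[OF assms(1)] .
  then have Pv: "norm2 (P v) \<noteq> 0"
    using norm2_eq_0_AE assms(2) unfolding ae_eq_def L2p_def by blast
  moreover have "norm2 v \<noteq> 0"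
  proof
    assume "norm2 v = 0"
    then have "ip v (P v) = 0"
      using ip_eq_0_if_norm2_eq_0 v unfolding L2p_def by blast
    then have "\<rho> * (norm2 (P v))^2 \<le> 0"
      using assms(4)[OF v] by simp
    with Pv assms(3) show False
      by (simp add: mult_le_0_iff)
  qed
  ultimately show ?thesis
    using that v by blast
qed

lemma mixture_bound_imp_component_bound:
  fixes \<nu> \<rho> :: "nat \<Rightarrow> real"
  assumes mixture: "\<And>\<tau>. (\<forall>k. \<tau> k \<ge> 0) \<Longrightarrow> \<tau> sums 1 \<Longrightarrow>
           summable (\<lambda>k. \<tau> k * \<nu> k) \<Longrightarrow> summable (\<lambda>k. \<tau> k * \<rho> k) \<Longrightarrow>
           (\<forall>u. L2p u \<longrightarrow> ip u (P u) \<ge>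
              (\<Sum>k. \<tau> k * \<nu> k) * (norm2 u)^2 + (\<Sum>k. \<tau> k * \<rho> k) * (norm2 (P u))^2)"
    and "L2p u"
  shows "\<nu> k * (norm2 u)^2 + \<rho> k * (norm2 (P u))^2 \<le> ip u (P u)"
proof -
  define \<tau> :: "nat \<Rightarrow> real" where "\<tau> = (\<lambda>j. if j = k then 1 else 0)"
  have weighted: "(\<lambda>j. \<tau> j * f j) sums f k" for f :: "nat \<Rightarrow> real"
  proof -
    have "(\<lambda>j. \<tau> j * f j) = (\<lambda>j. if j = k then f j else 0)"
      by (auto simp: \<tau>_def)
    then show ?thesis
      using sums_single[of k f] by simp
  qed
  have "\<tau> sums 1"
    using weighted[of "\<lambda>_. 1"] by simp
  then show ?thesis
    using mixture[of \<tau>] \<open>L2p u\<close> weighted[THEN sums_summable] weighted[THEN sums_unique]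
    by (simp add: \<tau>_def)
qed

theorem proposition4:
  fixes P :: "'n::finite signal \<Rightarrow> 'n signal"
    and \<nu> \<rho> :: "nat \<Rightarrow> real"
  assumes "causal P" and "stable P"
    and "\<And>k. \<nu> k > 0" and "\<And>k. \<rho> k > 0" and "\<And>k. \<nu> k * \<rho> k \<le> 1/4"
    and "\<And>\<tau>. (\<forall>k. \<tau> k \<ge> 0) \<Longrightarrow> \<tau> sums 1 \<Longrightarrow>
           summable (\<lambda>k. \<tau> k * \<nu> k) \<Longrightarrow> summable (\<lambda>k. \<tau> k * \<rho> k) \<Longrightarrow>
           (\<forall>u. L2p u \<longrightarrow> ip u (P u) \<ge>
              (\<Sum>k. \<tau> k * \<nu> k) * (norm2 u)^2 + (\<Sum>k. \<tau> k * \<rho> k) * (norm2 (P u))^2)"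
  shows "singular_angle P \<le> arccos (2 * sqrt (SUP k. \<nu> k * \<rho> k))"
proof -
  have L2p_P: "L2p (P u)" if "L2p u" for u
    using assms(2) that unfolding stable_def by auto
  have bound: "\<nu> k * (norm2 u)^2 + \<rho> k * (norm2 (P u))^2 \<le> ip u (P u)" if "L2p u" for u k
    using mixture_bound_imp_component_bound[OF assms(6) that] .
  have "\<rho> 0 * (norm2 (P u))^2 \<le> ip u (P u)" if "L2p u" for u
    using bound[OF that, of 0] assms(3)[of 0] by (smt (verit) zero_le_mult_iff zero_le_power2)
  then obtain v where v: "L2p v" "norm2 v \<noteq> 0" "norm2 (P v) \<noteq> 0"
    using causal_obtains_L2p_nonzero_input_output[OF assms(1) L2p_P assms(4)] by blast
  \<comment> \<open>The bound \<open>\<nu> k * \<rho> k \<le> 1/4\<close> is needed only to make the supremum meaningful.\<close>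
  have "0 \<le> (SUP k. \<nu> k * \<rho> k)"
    using assms(3-5)
    by (intro cSUP_upper2[where x=0]) (auto intro!: bdd_aboveI[where M="1/4"] simp: less_imp_le)
  then have "-1 \<le> 2 * sqrt (SUP k. \<nu> k * \<rho> k)"
    using real_sqrt_ge_zero[of "SUP k. \<nu> k * \<rho> k"] by linarith
  then show ?thesis
    unfolding singular_angle_def using v assms(3,4) L2p_P bound
    by (intro arccos_Inf_le)
       (auto intro!: two_sqrt_SUP_le_ip_div_norm2_mult ip_div_norm2_mult_le_1
         simp: less_imp_le L2p_def)
qed

end
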